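(* Let $\alpha>0$ be real. If $\alpha=1$ let $\mathcal X=\mathbb{CP}^1$ and $f(x)=1-x$; if $\alpha\neq1$ let $\mathcal X=(0,1)\subset\mathbb R$ and $f(x)=(1-x^\alpha)^{1/\alpha}$, so that in both cases $x^\alpha+f(x)^\alpha=1$. Let $S(x,y)=(u,v)=\big(x f(y)/f(xy),\,xy\big)$. Then: (i) $f(u)f(v)=f(x)$ for all $x,y$, with $(u,v)=S(x,y)$ (hence $S$ is a pentagon map); (ii) $S$ preserves the Poisson structure $\Omega=m(x,y)\,\partial x\wedge\partial y$ with $m(x,y)=y\,f(y)^{\alpha-1}f(x)^\alpha$, i.e. $m(u,v)/m(x,y)$ equals the Jacobian determinant $\det\frac{\partial(u,v)}{\partial(x,y)}$; (iii) $I(x,y)=x f(y)$ is invariant: $I(u,v)=I(x,y)$. Consequently $S$ is a Liouville integrable map.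
   Context: A map of the plane is Liouville integrable (in the sense of Veselov) if it preserves a Poisson structure and admits a functionally independent invariant function (one suffices in two dimensions). Pentagon map: for $S:Y\times Y\to Y\times Y$, with $S_{12}=S\times\mathrm{id}$, $S_{23}=\mathrm{id}\times S$, $S_{13}(y_1,y_2,y_3)=(p,y_2,q)$ where $(p,q)=S(y_1,y_3)$, one requires $S_{12}S_{13}S_{23}=S_{23}S_{12}$. *)

theory Defs
  imports "HOL-Analysis.Analysis"
begin

definition fR :: "real \<Rightarrow> real \<Rightarrow> real" where
  "fR \<alpha> x = (1 - x powr \<alpha>) powr (1 / \<alpha>)"

definition SR :: "real \<Rightarrow> real \<times> real \<Rightarrow> real \<times> real" where
  "SR \<alpha> p = (fst p * fR \<alpha> (snd p) / fR \<alpha> (fst p * snd p), fst p * snd p)"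

definition mR :: "real \<Rightarrow> real \<times> real \<Rightarrow> real" where
  "mR \<alpha> p = snd p * fR \<alpha> (snd p) powr (\<alpha> - 1) * fR \<alpha> (fst p) powr \<alpha>"

definition IR :: "real \<Rightarrow> real \<times> real \<Rightarrow> real" where
  "IR \<alpha> p = fst p * fR \<alpha> (snd p)"

section \<open>Case alpha = 1: rational map, affine chart of CP^1 x CP^1\<close>

definition fC :: "complex \<Rightarrow> complex" where
  "fC x = 1 - x"

definition SC :: "complex \<times> complex \<Rightarrow> complex \<times> complex" where
  "SC p = (fst p * fC (snd p) / fC (fst p * snd p), fst p * snd p)"

definition mC :: "complex \<times> complex \<Rightarrow> complex" where
  "mC p = snd p * fC (snd p) ^ 0 * fC (fst p)"

definition IC :: "complex \<times> complex \<Rightarrow> complex" where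
  "IC p = fst p * fC (snd p)"

definition jac :: "('a::real_normed_field \<times> 'a \<Rightarrow> 'a \<times> 'a) \<Rightarrow> 'a" where
  "jac D = fst (D (1,0)) * snd (D (0,1)) - fst (D (0,1)) * snd (D (1,0))"

end

(*
  Both maps have the form S_f(x, y) = (x f(y) / f(xy), xy) with f(t)^\<alpha> = 1 - t^\<alpha>, and the invariance
  of I = x f(y) is immediate from this shape. Raising u = x f(y) / f(xy) to the power \<alpha> gives
  1 - u^\<alpha> = (1 - x^\<alpha>) / (1 - x^\<alpha> y^\<alpha>) = (f(x) / f(xy))^\<alpha>, which is the pentagon relation
  f(u) f(xy) = f(x). For every differentiable f the Jacobian of S_f is x (f(y) - y f'(y)) / f(xy), the
  terms containing f'(xy) cancelling; differentiating f^\<alpha> = 1 - t^\<alpha> gives f - t f' = f^(1-\<alpha>), and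
  with this the Jacobian is exactly m(u, v) / m(x, y).
*)
theory Submission
  imports Defs
begin

definition pentagon_map :: "('a::field \<Rightarrow> 'a) \<Rightarrow> 'a \<times> 'a \<Rightarrow> 'a \<times> 'a" where
  "pentagon_map f p = (fst p * f (snd p) / f (fst p * snd p), fst p * snd p)"

definition pentagon_invariant :: "('a::field \<Rightarrow> 'a) \<Rightarrow> 'a \<times> 'a \<Rightarrow> 'a" where
  "pentagon_invariant f p = fst p * f (snd p)"

lemma pentagon_invariant_pentagon_map:
  "f (x * y) \<noteq> 0 \<Longrightarrow> pentagon_invariant f (pentagon_map f (x, y)) = pentagon_invariant f (x, y)"
  by (simp add: pentagon_map_def pentagon_invariant_def)

lemma has_derivative_fst_mult_snd:
  "((\<lambda>p. fst p * snd p) has_derivative (\<lambda>h. x * snd h + fst h * y)) (at (x, y))"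
  for x y :: "'a::real_normed_algebra"
  by (auto intro!: derivative_eq_intros)

lemma has_derivative_comp_snd:
  assumes "(f has_field_derivative f') (at y)"
  shows "((\<lambda>p. f (snd p)) has_derivative (\<lambda>h. f' * snd h)) (at (x, y))"
  using has_derivative_compose[where f=snd and x="(x, y)" and g=f and g'="(*) f'"] assms
  by (simp add: has_field_derivative_def has_derivative_snd[OF has_derivative_ident])

lemma has_derivative_comp_fst_mult_snd:
  assumes "(f has_field_derivative f') (at (x * y))"
  shows "((\<lambda>p. f (fst p * snd p)) has_derivative (\<lambda>h. f' * (x * snd h + fst h * y))) (at (x, y))"
  using has_derivative_compose[OF has_derivative_fst_mult_snd, where g=f and g'="(*) f'"] assms
  by (simp add: has_field_derivative_def)

lemma has_derivative_pentagon_map: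
  fixes f :: "'a::real_normed_field \<Rightarrow> 'a"
  assumes fy: "(f has_field_derivative f'y) (at y)"
    and fxy: "(f has_field_derivative f'xy) (at (x * y))"
    and nz: "f (x * y) \<noteq> 0"
  shows "\<exists>D. (pentagon_map f has_derivative D) (at (x, y)) \<and> jac D = x * (f y - y * f'y) / f (x * y)"
proof (intro exI conjI)
  define N where "N = (\<lambda>h. x * (f'y * snd h) + fst h * f y)"
  define P where "P = (\<lambda>h. x * snd h + fst h * y)"
  have num: "((\<lambda>p. fst p * f (snd p)) has_derivative N) (at (x, y))"
    unfolding N_def
    using has_derivative_mult[OF has_derivative_fst[OF has_derivative_ident] has_derivative_comp_snd[OF fy, of x]]
    by simp
  have den: "((\<lambda>p. f (fst p * snd p)) has_derivative (\<lambda>h. f'xy * P h)) (at (x, y))"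
    unfolding P_def by (rule has_derivative_comp_fst_mult_snd[OF fxy])
  show "(pentagon_map f has_derivative
      (\<lambda>h. ((N h * f (x * y) - x * f y * (f'xy * P h)) / (f (x * y) * f (x * y)), P h))) (at (x, y))"
    using has_derivative_Pair[OF has_derivative_divide'[OF num den] has_derivative_fst_mult_snd] nz
    by (simp add: pentagon_map_def[abs_def] P_def)
  show "jac (\<lambda>h. ((N h * f (x * y) - x * f y * (f'xy * P h)) / (f (x * y) * f (x * y)), P h))
      = x * (f y - y * f'y) / f (x * y)"
    using nz by (simp add: jac_def N_def P_def field_simps)
qed

lemma has_derivative_pentagon_invariant_nonzero:
  fixes f :: "'a::real_normed_field \<Rightarrow> 'a"
  assumes fy: "(f has_field_derivative f') (at y)" and nz: "f y \<noteq> 0"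
  shows "\<exists>D. (pentagon_invariant f has_derivative D) (at (x, y)) \<and> D \<noteq> (\<lambda>_. 0)"
proof (intro exI conjI)
  show "(pentagon_invariant f has_derivative (\<lambda>h. x * (f' * snd h) + fst h * f y)) (at (x, y))"
    using has_derivative_mult[OF has_derivative_fst[OF has_derivative_ident] has_derivative_comp_snd[OF fy, of x]]
    by (simp add: pentagon_invariant_def[abs_def])
  show "(\<lambda>h. x * (f' * snd h) + fst h * f y) \<noteq> (\<lambda>_. 0)"
  proof
    assume "(\<lambda>h. x * (f' * snd h) + fst h * f y) = (\<lambda>_. 0)"
    from fun_cong[OF this, of "(1, 0)"] nz show False by simp
  qed
qed

lemma mult_in_unit_interval:
  fixes x y :: real
  assumes "0 < x" "x < 1" "0 < y" "y < 1"
  shows "0 < x * y" "x * y < 1"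
  using assms mult_strict_mono[of x 1 y 1] by auto

lemma SR_eq_pentagon_map: "SR \<alpha> = pentagon_map (fR \<alpha>)"
  by (simp add: fun_eq_iff SR_def pentagon_map_def)

lemma IR_eq_pentagon_invariant: "IR \<alpha> = pentagon_invariant (fR \<alpha>)"
  by (simp add: fun_eq_iff IR_def pentagon_invariant_def)

lemma powr_less_one_base: "0 < a \<Longrightarrow> 0 \<le> t \<Longrightarrow> t < 1 \<Longrightarrow> t powr a < (1::real)"
  using powr_less_mono2[of a t 1] by simp

context
  fixes \<alpha> :: real
  assumes \<alpha>: "\<alpha> > 0"
begin

lemma fR_pos: "0 < t \<Longrightarrow> t < 1 \<Longrightarrow> fR \<alpha> t > 0"
  unfolding fR_def using powr_less_one_base[OF \<alpha>, of t] \<alpha> by simp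

lemma fR_powr: "0 < t \<Longrightarrow> t < 1 \<Longrightarrow> fR \<alpha> t powr \<alpha> = 1 - t powr \<alpha>"
  unfolding fR_def using powr_less_one_base[OF \<alpha>, of t] \<alpha> by (simp add: powr_powr)

lemma fR_eqI:
  assumes "0 \<le> z" and "z powr \<alpha> = 1 - t powr \<alpha>"
  shows "fR \<alpha> t = z"
proof -
  have "fR \<alpha> t = (z powr \<alpha>) powr (1 / \<alpha>)"
    unfolding fR_def assms(2) ..
  then show ?thesis
    using assms(1) \<alpha> by (simp add: powr_powr)
qed

lemma fR_has_real_derivative:
  assumes "0 < t" "t < 1"
  shows "(fR \<alpha> has_real_derivative - (t powr (\<alpha> - 1) * fR \<alpha> t powr (1 - \<alpha>))) (at t)"
proof -
  have pos: "1 - t powr \<alpha> > 0"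
    using powr_less_one_base[OF \<alpha>] assms by simp
  have "((\<lambda>t. (1 - t powr \<alpha>) powr (1 / \<alpha>)) has_real_derivative
      (1 / \<alpha>) * (1 - t powr \<alpha>) powr (1 / \<alpha> - of_nat 1) * (0 - \<alpha> * t powr (\<alpha> - 1))) (at t)"
    by (intro DERIV_fun_powr derivative_intros has_real_derivative_powr assms pos)
  moreover have "(1 - t powr \<alpha>) powr (1 / \<alpha> - 1) = fR \<alpha> t powr (1 - \<alpha>)"
    unfolding fR_def using pos \<alpha> by (simp add: powr_powr field_simps)
  ultimately show ?thesis
    using \<alpha> unfolding fR_def[abs_def] by (simp add: ac_simps)
qed

lemma fR_minus_mult_derivative:
  assumes "0 < t" "t < 1"
  shows "fR \<alpha> t - t * - (t powr (\<alpha> - 1) * fR \<alpha> t powr (1 - \<alpha>)) = fR \<alpha> t powr (1 - \<alpha>)"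
proof -
  have "fR \<alpha> t - t * - (t powr (\<alpha> - 1) * fR \<alpha> t powr (1 - \<alpha>))
      = fR \<alpha> t powr \<alpha> * fR \<alpha> t powr (1 - \<alpha>) + t powr \<alpha> * fR \<alpha> t powr (1 - \<alpha>)"
    using assms fR_pos[OF assms] by (simp add: powr_mult_base flip: powr_add)
  also have "\<dots> = fR \<alpha> t powr (1 - \<alpha>)"
    using fR_powr[OF assms] by (simp flip: distrib_right)
  finally show ?thesis .
qed

context
  fixes x y :: real
  assumes x: "0 < x" "x < 1" and y: "0 < y" "y < 1"
begin

lemma powr_SR_fst:
  "(x * fR \<alpha> y / fR \<alpha> (x * y)) powr \<alpha> = x powr \<alpha> * (1 - y powr \<alpha>) / (1 - x powr \<alpha> * y powr \<alpha>)"
  using x y fR_pos[OF y] fR_pos[OF mult_in_unit_interval[OF x y]] fR_powr[OF y] fR_powr[OF mult_in_unit_interval[OF x y]]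
  by (simp add: powr_mult powr_divide)

lemma SR_mem_unit_square: "SR \<alpha> (x, y) \<in> {0<..<1} \<times> {0<..<1}"
proof -
  define u where "u = x * fR \<alpha> y / fR \<alpha> (x * y)"
  have "u > 0"
    unfolding u_def using x fR_pos[OF y] fR_pos[OF mult_in_unit_interval[OF x y]] by simp
  moreover have "u powr \<alpha> < 1 powr \<alpha>"
    unfolding u_def powr_SR_fst
    using powr_less_one_base[OF \<alpha>, of x] powr_less_one_base[OF \<alpha>, of y] x y
      mult_strict_mono[of "x powr \<alpha>" 1 "y powr \<alpha>" 1]
    by (simp add: divide_less_eq algebra_simps)
  ultimately have "u < 1"
    using powr_less_cancel2[OF \<alpha>] by simp
  then show ?thesis
    using \<open>u > 0\<close> mult_in_unit_interval[OF x y] unfolding SR_def u_def by simp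
qed

lemma fR_SR_fst: "fR \<alpha> (x * fR \<alpha> y / fR \<alpha> (x * y)) = fR \<alpha> x / fR \<alpha> (x * y)"
proof (rule fR_eqI)
  have "x powr \<alpha> * y powr \<alpha> < 1"
    using powr_less_one_base[OF \<alpha>, of x] powr_less_one_base[OF \<alpha>, of y] x y
      mult_strict_mono[of "x powr \<alpha>" 1 "y powr \<alpha>" 1]
    by simp
  then show "(fR \<alpha> x / fR \<alpha> (x * y)) powr \<alpha> = 1 - (x * fR \<alpha> y / fR \<alpha> (x * y)) powr \<alpha>"
    unfolding powr_SR_fst
    using fR_pos[OF x] fR_pos[OF mult_in_unit_interval[OF x y]]
    by (simp add: powr_divide fR_powr[OF x] fR_powr[OF mult_in_unit_interval[OF x y]] powr_mult x y field_simps)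
  show "0 \<le> fR \<alpha> x / fR \<alpha> (x * y)"
    using fR_pos[OF x] fR_pos[OF mult_in_unit_interval[OF x y]] by simp
qed

lemma mR_SR_div_mR:
  "mR \<alpha> (SR \<alpha> (x, y)) / mR \<alpha> (x, y) = x * fR \<alpha> y powr (1 - \<alpha>) / fR \<alpha> (x * y)"
proof -
  define A B C where "A = fR \<alpha> y" and "B = fR \<alpha> (x * y)" and "C = fR \<alpha> x"
  have pos: "A > 0" "B > 0" "C > 0"
    unfolding A_def B_def C_def using fR_pos x y mult_in_unit_interval[OF x y] by auto
  have "mR \<alpha> (SR \<alpha> (x, y)) = x * y * B powr (\<alpha> - 1) * (C / B) powr \<alpha>"
    by (simp add: mR_def SR_def fR_SR_fst A_def B_def C_def)
  also have "\<dots> = x * y * C powr \<alpha> / B"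
    using pos by (simp add: powr_divide powr_diff)
  finally have "mR \<alpha> (SR \<alpha> (x, y)) = x * y * C powr \<alpha> / B" .
  moreover have "mR \<alpha> (x, y) = y * A powr (\<alpha> - 1) * C powr \<alpha>"
    unfolding mR_def A_def B_def C_def by simp
  moreover have "A powr (1 - \<alpha>) * A powr (\<alpha> - 1) = 1"
    using pos by (simp flip: powr_add)
  ultimately show ?thesis
    using pos y unfolding A_def[symmetric] B_def[symmetric] C_def[symmetric] by (simp add: field_simps)
qed

end

lemma SR_has_derivative_jac_eq_mR_div:
  assumes x: "0 < x" "x < 1" and y: "0 < y" "y < 1"
  shows "\<exists>D. (SR \<alpha> has_derivative D) (at (x, y)) \<and> jac D = mR \<alpha> (SR \<alpha> (x, y)) / mR \<alpha> (x, y)"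
proof -
  obtain D where "(pentagon_map (fR \<alpha>) has_derivative D) (at (x, y))"
    and "jac D = x * (fR \<alpha> y - y * - (y powr (\<alpha> - 1) * fR \<alpha> y powr (1 - \<alpha>))) / fR \<alpha> (x * y)"
    using has_derivative_pentagon_map[OF fR_has_real_derivative[OF y]
        fR_has_real_derivative[OF mult_in_unit_interval[OF x y]]
        fR_pos[OF mult_in_unit_interval[OF x y], THEN less_imp_neq, THEN not_sym]]
    by blast
  then show ?thesis
    unfolding SR_eq_pentagon_map[symmetric] fR_minus_mult_derivative[OF y] mR_SR_div_mR[OF x y]
    by blast
qed

end

lemma SC_eq_pentagon_map: "SC = pentagon_map fC"
  by (simp add: fun_eq_iff SC_def pentagon_map_def)

lemma IC_eq_pentagon_invariant: "IC = pentagon_invariant fC"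
  by (simp add: fun_eq_iff IC_def pentagon_invariant_def)

lemma fC_has_field_derivative: "(fC has_field_derivative -1) (at z)"
  unfolding fC_def[abs_def] by (auto intro!: derivative_eq_intros)

lemma fC_SC_fst_mult_fC_SC_snd:
  "x * y \<noteq> 1 \<Longrightarrow> fC (fst (SC (x, y))) * fC (snd (SC (x, y))) = fC x"
  by (simp add: SC_def fC_def field_simps)

lemma mC_SC_div_mC:
  assumes "x * y \<noteq> 1" "x \<noteq> 1" "y \<noteq> 0"
  shows "mC (SC (x, y)) / mC (x, y) = x / (1 - x * y)"
proof -
  have "1 - x * y \<noteq> 0" "1 - x \<noteq> 0"
    using assms by auto
  have "mC (SC (x, y)) = x * y * (1 - x) / (1 - x * y)"
    using \<open>1 - x * y \<noteq> 0\<close> by (simp add: mC_def SC_def fC_def field_simps)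
  moreover have "mC (x, y) = y * (1 - x)"
    by (simp add: mC_def fC_def)
  ultimately show ?thesis
    using \<open>1 - x \<noteq> 0\<close> assms(3) by simp
qed

lemma SC_has_derivative_jac_eq_mC_div:
  assumes "x * y \<noteq> 1" "x \<noteq> 1" "y \<noteq> 0"
  shows "\<exists>D. (SC has_derivative D) (at (x, y)) \<and> jac D = mC (SC (x, y)) / mC (x, y)"
proof -
  have "fC (x * y) \<noteq> 0"
    using assms(1) by (simp add: fC_def)
  then obtain D where "(pentagon_map fC has_derivative D) (at (x, y))"
    and "jac D = x * (fC y - y * - 1) / fC (x * y)"
    using has_derivative_pentagon_map[OF fC_has_field_derivative fC_has_field_derivative] by blast
  moreover have "x * (fC y - y * - 1) / fC (x * y) = mC (SC (x, y)) / mC (x, y)"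
    unfolding mC_SC_div_mC[OF assms] by (simp add: fC_def)
  ultimately show ?thesis
    unfolding SC_eq_pentagon_map by auto
qed

theorem mainTheorem4:
  fixes \<alpha> :: real
  assumes "\<alpha> > 0"
  shows
   "(\<alpha> = 1 \<longrightarrow>
      (\<forall>x y :: complex. x * y \<noteq> 1 \<longrightarrow>
         fC (fst (SC (x,y))) * fC (snd (SC (x,y))) = fC x
       \<and> IC (SC (x,y)) = IC (x,y)
       \<and> (y \<noteq> 0 \<and> x \<noteq> 1 \<longrightarrow>
            (\<exists>D. (SC has_derivative D) (at (x,y)) \<and> jac D = mC (SC (x,y)) / mC (x,y)))
       \<and> (y \<noteq> 1 \<longrightarrow> (\<exists>D. (IC has_derivative D) (at (x,y)) \<and> D \<noteq> (\<lambda>_. 0)))))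
  \<and> (\<alpha> \<noteq> 1 \<longrightarrow>
      (\<forall>x y :: real. 0 < x \<and> x < 1 \<and> 0 < y \<and> y < 1 \<longrightarrow>
         SR \<alpha> (x,y) \<in> {0<..<1} \<times> {0<..<1}
       \<and> fR \<alpha> (fst (SR \<alpha> (x,y))) * fR \<alpha> (snd (SR \<alpha> (x,y))) = fR \<alpha> x
       \<and> IR \<alpha> (SR \<alpha> (x,y)) = IR \<alpha> (x,y)
       \<and> (\<exists>D. (SR \<alpha> has_derivative D) (at (x,y)) \<and> jac D = mR \<alpha> (SR \<alpha> (x,y)) / mR \<alpha> (x,y))
       \<and> (\<exists>D. (IR \<alpha> has_derivative D) (at (x,y)) \<and> D \<noteq> (\<lambda>_. 0))))"
proof (intro conjI impI allI)
  fix x y :: complex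
  assume xy: "x * y \<noteq> 1"
  then have nz: "fC (x * y) \<noteq> 0"
    by (simp add: fC_def)
  show "fC (fst (SC (x, y))) * fC (snd (SC (x, y))) = fC x"
    using xy by (rule fC_SC_fst_mult_fC_SC_snd)
  show "IC (SC (x, y)) = IC (x, y)"
    using pentagon_invariant_pentagon_map[of fC x y] nz
    by (simp add: IC_eq_pentagon_invariant SC_eq_pentagon_map)
  show "\<exists>D. (SC has_derivative D) (at (x, y)) \<and> jac D = mC (SC (x, y)) / mC (x, y)"
    if "y \<noteq> 0 \<and> x \<noteq> 1"
    using SC_has_derivative_jac_eq_mC_div xy that by blast
  show "\<exists>D. (IC has_derivative D) (at (x, y)) \<and> D \<noteq> (\<lambda>_. 0)" if "y \<noteq> 1"
    using has_derivative_pentagon_invariant_nonzero[OF fC_has_field_derivative] that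
    by (simp add: IC_eq_pentagon_invariant fC_def)
next
  fix x y :: real
  assume "0 < x \<and> x < 1 \<and> 0 < y \<and> y < 1"
  then have x: "0 < x" "x < 1" and y: "0 < y" "y < 1"
    by auto
  show "SR \<alpha> (x, y) \<in> {0<..<1} \<times> {0<..<1}"
    using SR_mem_unit_square[OF assms x y] .
  show "fR \<alpha> (fst (SR \<alpha> (x, y))) * fR \<alpha> (snd (SR \<alpha> (x, y))) = fR \<alpha> x"
    using fR_SR_fst[OF assms x y] fR_pos[OF assms mult_in_unit_interval[OF x y]] by (simp add: SR_def)
  show "IR \<alpha> (SR \<alpha> (x, y)) = IR \<alpha> (x, y)"
    using pentagon_invariant_pentagon_map[of "fR \<alpha>" x y] fR_pos[OF assms mult_in_unit_interval[OF x y]]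
    by (simp add: IR_eq_pentagon_invariant SR_eq_pentagon_map)
  show "\<exists>D. (SR \<alpha> has_derivative D) (at (x, y)) \<and> jac D = mR \<alpha> (SR \<alpha> (x, y)) / mR \<alpha> (x, y)"
    using SR_has_derivative_jac_eq_mR_div[OF assms x y] .
  show "\<exists>D. (IR \<alpha> has_derivative D) (at (x, y)) \<and> D \<noteq> (\<lambda>_. 0)"
    using has_derivative_pentagon_invariant_nonzero[OF fR_has_real_derivative[OF assms y]] fR_pos[OF assms y]
    by (simp add: IR_eq_pentagon_invariant)
qed

end
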